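(* Let $\epsilon\in(0,1]$, $\delta\in(0,1)$, $0<\gamma\le\epsilon/14$, and $b=4/\gamma$. Then for every belief matrix $P\in[0,1]^{n\times m}$ and ground truth $\vec\theta\in[0,1]^m$ with $m\ge\frac{28\ln(2n/\delta)}{\epsilon\gamma}$, and every report matrix $R$ in which each $r_i$ is undominated for belief $p_i$, ReportNoisyMax with scale $b$ selects an $\epsilon$-optimal forecaster with probability at least $1-\delta$ (over $\vec y\sim\vec\theta$ and the noise). In particular its event complexity is $O(\ln(n/\delta)/\epsilon^2)$.
   Context: Setting: $n$ forecasters, $m$ independent binary events with $\Pr[y_t=1]=\theta_t$; forecaster $i$ has beliefs $p_i\in[0,1]^m$ and reports $r_i\in[0,1]^m$. Quadratic score $S(q,y)=1-(y-q)^2$. Accuracy $a_i=1-\frac1m\sum_t(p_{it}-\theta_t)^2$; $i$ is $\epsilon$-optimal if $a_i\ge\max_ja_j-\epsilon$. ReportNoisyMax with scale $b$: compute $q_j=\sum_tS(r_{jt},y_t)$, add independent Laplace noise with density $\frac1{2b}e^{-|w|/b}$ to each, and select the forecaster with the largest noisy total. $M(R;p_i)=\mathbb{E}_{\vec y\sim p_i}M(R,\vec y)$ with $y_t\sim\mathrm{Bernoulli}(p_{it})$ independently; for fixed $p_i$, $\hat r_i$ strictly dominates $r_i$ if $M(\hat r_i,R_{-i};p_i)_i>M(r_i,R_{-i};p_i)_i$ for all $R_{-i}$, and $r_i$ is undominated if nothing strictly dominates it. *)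

theory Defs
  imports "HOL-Probability.Probability"
begin

text \<open>Forecasters are indexed by i < n, events by t < m.
  Beliefs/reports: nat \<Rightarrow> nat \<Rightarrow> real (forecaster, event); outcomes y : nat \<Rightarrow> bool.\<close>

definition quad_score :: "real \<Rightarrow> bool \<Rightarrow> real" where
  "quad_score q y = 1 - (of_bool y - q)^2"

definition total_score :: "nat \<Rightarrow> (nat \<Rightarrow> real) \<Rightarrow> (nat \<Rightarrow> bool) \<Rightarrow> real" where
  "total_score m r y = (\<Sum>t<m. quad_score (r t) (y t))"

definition laplace_density :: "real \<Rightarrow> real \<Rightarrow> real" where
  "laplace_density b w = exp (- \<bar>w\<bar> / b) / (2 * b)"

definition laplace_measure :: "real \<Rightarrow> real measure" where
  "laplace_measure b = density lborel (\<lambda>w. ennreal (laplace_density b w))"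

definition noise_measure :: "nat \<Rightarrow> real \<Rightarrow> (nat \<Rightarrow> real) measure" where
  "noise_measure n b = PiM {..<n} (\<lambda>_. laplace_measure b)"

text \<open>M(R, y)_i: probability (over the independent noise) that ReportNoisyMax selects i,
  i.e. that i has the strictly largest noisy total (ties have probability zero).\<close>
definition rnm_select :: "nat \<Rightarrow> nat \<Rightarrow> real \<Rightarrow> (nat \<Rightarrow> nat \<Rightarrow> real) \<Rightarrow> (nat \<Rightarrow> bool) \<Rightarrow> nat \<Rightarrow> real" where
  "rnm_select n m b R y i = measure (noise_measure n b)
     {w \<in> space (noise_measure n b). \<forall>j<n. j \<noteq> i \<longrightarrow>
         total_score m (R j) y + w j < total_score m (R i) y + w i}"

definition outcomes :: "nat \<Rightarrow> (nat \<Rightarrow> bool) set" where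
  "outcomes m = PiE {..<m} (\<lambda>_. UNIV)"

definition outcome_prob :: "nat \<Rightarrow> (nat \<Rightarrow> real) \<Rightarrow> (nat \<Rightarrow> bool) \<Rightarrow> real" where
  "outcome_prob m \<theta> y = (\<Prod>t<m. if y t then \<theta> t else 1 - \<theta> t)"

definition rnm_expected :: "nat \<Rightarrow> nat \<Rightarrow> real \<Rightarrow> (nat \<Rightarrow> nat \<Rightarrow> real) \<Rightarrow> (nat \<Rightarrow> real) \<Rightarrow> nat \<Rightarrow> real" where
  "rnm_expected n m b R p i = (\<Sum>y\<in>outcomes m. outcome_prob m p y * rnm_select n m b R y i)"

definition unit_vec :: "nat \<Rightarrow> (nat \<Rightarrow> real) \<Rightarrow> bool" where
  "unit_vec m v \<longleftrightarrow> (\<forall>t<m. 0 \<le> v t \<and> v t \<le> 1)"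

definition report_matrix :: "nat \<Rightarrow> nat \<Rightarrow> (nat \<Rightarrow> nat \<Rightarrow> real) \<Rightarrow> bool" where
  "report_matrix n m R \<longleftrightarrow> (\<forall>j<n. unit_vec m (R j))"

definition strictly_dominates :: "nat \<Rightarrow> nat \<Rightarrow> real \<Rightarrow> nat \<Rightarrow> (nat \<Rightarrow> real) \<Rightarrow> (nat \<Rightarrow> real) \<Rightarrow> (nat \<Rightarrow> real) \<Rightarrow> bool" where
  "strictly_dominates n m b i p rhat r \<longleftrightarrow>
     (\<forall>R. report_matrix n m R \<longrightarrow>
        rnm_expected n m b (R(i := rhat)) p i > rnm_expected n m b (R(i := r)) p i)"

definition undominated :: "nat \<Rightarrow> nat \<Rightarrow> real \<Rightarrow> nat \<Rightarrow> (nat \<Rightarrow> real) \<Rightarrow> (nat \<Rightarrow> real) \<Rightarrow> bool" where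
  "undominated n m b i p r \<longleftrightarrow>
     \<not> (\<exists>rhat. unit_vec m rhat \<and> strictly_dominates n m b i p rhat r)"

definition accuracy :: "nat \<Rightarrow> (nat \<Rightarrow> real) \<Rightarrow> (nat \<Rightarrow> real) \<Rightarrow> real" where
  "accuracy m p \<theta> = 1 - (1 / real m) * (\<Sum>t<m. (p t - \<theta> t)^2)"

definition eps_optimal :: "nat \<Rightarrow> nat \<Rightarrow> real \<Rightarrow> (nat \<Rightarrow> nat \<Rightarrow> real) \<Rightarrow> (nat \<Rightarrow> real) \<Rightarrow> nat \<Rightarrow> bool" where
  "eps_optimal n m \<epsilon> P \<theta> i \<longleftrightarrow>
     (\<forall>j<n. accuracy m (P i) \<theta> \<ge> accuracy m (P j) \<theta> - \<epsilon>)"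

definition success_prob :: "nat \<Rightarrow> nat \<Rightarrow> real \<Rightarrow> real \<Rightarrow> (nat \<Rightarrow> nat \<Rightarrow> real) \<Rightarrow> (nat \<Rightarrow> nat \<Rightarrow> real) \<Rightarrow> (nat \<Rightarrow> real) \<Rightarrow> real" where
  "success_prob n m b \<epsilon> P R \<theta> =
     (\<Sum>y\<in>outcomes m. outcome_prob m \<theta> y *
        (\<Sum>i\<in>{i. i < n \<and> eps_optimal n m \<epsilon> P \<theta> i}. rnm_select n m b R y i))"

end

theory Submission
  imports Defs
begin

text \<open>The Laplace density changes by at most a factor \<open>exp (\<Delta> / b)\<close> over a distance \<open>\<Delta>\<close>.
  Hence, whatever the others report, moving one coordinate \<open>r t\<close> of a report halfway towards
  the belief \<open>p t\<close> strictly increases the expected selection probability as soon as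
  \<open>\<bar>r t - p t\<bar> > 6 / b\<close>: the gain on the more likely outcome beats the loss on the other one.
  So undominated reports are within \<open>6 / b = 3 \<gamma> / 2\<close> of the beliefs. Since the expected
  quadratic score of a report is, up to a term common to all forecasters, \<open>m\<close> times the accuracy
  of the belief it approximates, every forecaster that is not \<open>\<epsilon>\<close>-optimal trails the most
  accurate one by at least \<open>4 \<epsilon> m / 7\<close> in expected score. By Hoeffding's inequality all realized
  scores are within \<open>\<epsilon> m / 7\<close> of their expectations with probability \<open>1 - \<delta> / 2\<close>; then the
  most accurate forecaster leads every non-optimal one by \<open>2 \<epsilon> m / 7\<close>, and the Laplace noise
  overturns such a lead with probability at most \<open>n exp (- \<epsilon> \<gamma> m / 28) \<le> \<delta> / 2\<close>.\<close>

section \<open>Laplace noise\<close>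

lemma laplace_density_pos: "0 < b \<Longrightarrow> 0 < laplace_density b x"
  by (simp add: laplace_density_def)

lemma laplace_density_mult_exp_le:
  assumes "0 < b"
  shows "laplace_density b y * exp (- \<bar>x - y\<bar> / b) \<le> laplace_density b x"
proof -
  have "\<bar>x\<bar> / b \<le> (\<bar>y\<bar> + \<bar>x - y\<bar>) / b"
    using assms by (intro divide_right_mono) auto
  then have "- \<bar>y\<bar> / b - \<bar>x - y\<bar> / b \<le> - \<bar>x\<bar> / b"
    by (simp add: add_divide_distrib)
  then have "exp (- \<bar>y\<bar> / b) * exp (- \<bar>x - y\<bar> / b) \<le> exp (- \<bar>x\<bar> / b)"
    by (simp flip: exp_add)
  then show ?thesis
    using assms unfolding laplace_density_def by (simp add: divide_right_mono field_simps)
qed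

lemma borel_measurable_laplace_density [measurable]:
  "laplace_density b \<in> borel_measurable borel"
  unfolding laplace_density_def by measurable

lemma nn_integral_laplace_density_atLeast:
  assumes b: "0 < b" and a: "0 \<le> a"
  shows "(\<integral>\<^sup>+x. ennreal (laplace_density b x) * indicator {a..} x \<partial>lborel) = ennreal (exp (- a / b) / 2)"
proof -
  have "(\<integral>\<^sup>+x. ennreal (laplace_density b x) * indicator {a..} x \<partial>lborel)
      = (\<integral>\<^sup>+x. ennreal (exp (- x / b) / (2 * b)) * indicator {a..} x \<partial>lborel)"
    using a by (intro nn_integral_cong) (auto simp: laplace_density_def split: split_indicator)
  also have "\<dots> = ennreal (0 - (- exp (- a / b) / 2))"
  proof (rule nn_integral_FTC_atLeast)
    fix x
    show "((\<lambda>x. - exp (- x / b) / 2) has_real_derivative exp (- x / b) / (2 * b)) (at x)"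
      using b by (auto intro!: derivative_eq_intros simp: field_simps)
    show "0 \<le> exp (- x / b) / (2 * b)"
      using b by simp
  next
    show "((\<lambda>x. - exp (- x / b) / 2) \<longlongrightarrow> 0) at_top"
      using b by real_asymp
  qed measurable
  finally show ?thesis
    by simp
qed

lemma nn_integral_laplace_density_atMost:
  assumes "0 < b" and "0 \<le> a"
  shows "(\<integral>\<^sup>+x. ennreal (laplace_density b x) * indicator {..-a} x \<partial>lborel) = ennreal (exp (- a / b) / 2)"
proof -
  have "(\<integral>\<^sup>+x. ennreal (laplace_density b x) * indicator {..-a} x \<partial>lborel)
     = (\<integral>\<^sup>+x. ennreal (laplace_density b (0 + -1 * x)) * indicator {..-a} (0 + -1 * x) \<partial>lborel)"
    using nn_integral_real_affine[of "\<lambda>x. ennreal (laplace_density b x) * indicator {..-a} x" "-1" 0]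
    by simp
  also have "\<dots> = (\<integral>\<^sup>+x. ennreal (laplace_density b x) * indicator {a..} x \<partial>lborel)"
    by (intro nn_integral_cong) (auto simp: laplace_density_def split: split_indicator)
  finally show ?thesis
    using nn_integral_laplace_density_atLeast[OF assms] by simp
qed

lemma sets_laplace_measure [simp, measurable_cong]: "sets (laplace_measure b) = sets borel"
  by (simp add: laplace_measure_def)

lemma space_laplace_measure [simp]: "space (laplace_measure b) = UNIV"
  by (simp add: laplace_measure_def)

lemma emeasure_laplace_measure:
  "A \<in> sets borel \<Longrightarrow>
    emeasure (laplace_measure b) A = (\<integral>\<^sup>+x. ennreal (laplace_density b x) * indicator A x \<partial>lborel)"
  unfolding laplace_measure_def by (simp add: emeasure_density)

lemma prob_space_laplace_measure: "0 < b \<Longrightarrow> prob_space (laplace_measure b)"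
proof
  assume b: "0 < b"
  have "emeasure (laplace_measure b) (space (laplace_measure b))
      = (\<integral>\<^sup>+x. ennreal (laplace_density b x) * indicator {0..} x
               + ennreal (laplace_density b x) * indicator {..-0} x \<partial>lborel)"
    by (subst emeasure_laplace_measure)
      (auto intro!: nn_integral_cong_AE eventually_mono[OF AE_lborel_singleton[of 0]]
        split: split_indicator)
  also have "\<dots> = ennreal (exp (- 0 / b) / 2) + ennreal (exp (- 0 / b) / 2)"
    using b nn_integral_laplace_density_atMost[OF b order.refl]
    by (subst nn_integral_add) (auto simp: nn_integral_laplace_density_atLeast)
  also have "\<dots> = 1"
    by (subst ennreal_plus[symmetric]) auto
  finally show "emeasure (laplace_measure b) (space (laplace_measure b)) = 1" .
qed

lemma measure_laplace_atLeast:
  "0 < b \<Longrightarrow> 0 \<le> a \<Longrightarrow> measure (laplace_measure b) {a..} = exp (- a / b) / 2"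
  by (simp add: measure_def emeasure_laplace_measure nn_integral_laplace_density_atLeast)

lemma measure_laplace_atMost:
  "0 < b \<Longrightarrow> 0 \<le> a \<Longrightarrow> measure (laplace_measure b) {..-a} = exp (- a / b) / 2"
  by (simp add: measure_def emeasure_laplace_measure nn_integral_laplace_density_atMost)

lemma measure_laplace_singleton: "measure (laplace_measure b) {c} = 0"
proof -
  have "emeasure (laplace_measure b) {c} = 0"
    by (subst emeasure_laplace_measure)
      (auto intro!: nn_integral_zero' eventually_mono[OF AE_lborel_singleton[of c]]
        split: split_indicator)
  then show ?thesis
    by (simp add: measure_def)
qed

lemma measure_laplace_Ioc_le:
  assumes "0 < b" "0 \<le> h" "0 \<le> K" and "\<And>x. x \<in> {c<..c+h} \<Longrightarrow> laplace_density b x \<le> K"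
  shows "measure (laplace_measure b) {c<..c+h} \<le> K * h"
proof -
  interpret prob_space "laplace_measure b"
    using assms(1) by (rule prob_space_laplace_measure)
  have "emeasure (laplace_measure b) {c<..c+h} \<le> (\<integral>\<^sup>+x. ennreal K * indicator {c<..c+h} x \<partial>lborel)"
    using assms(4) by (subst emeasure_laplace_measure)
      (auto intro!: nn_integral_mono ennreal_leI split: split_indicator)
  also have "\<dots> = ennreal (K * h)"
    using assms(2,3) by (simp add: nn_integral_cmult_indicator ennreal_mult)
  finally show ?thesis
    using assms(2,3) by (simp add: emeasure_eq_measure)
qed

lemma measure_laplace_Ioc_ge:
  assumes "0 < b" "0 \<le> h" "0 \<le> K" and "\<And>x. x \<in> {c<..c+h} \<Longrightarrow> K \<le> laplace_density b x"
  shows "K * h \<le> measure (laplace_measure b) {c<..c+h}"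
proof -
  interpret prob_space "laplace_measure b"
    using assms(1) by (rule prob_space_laplace_measure)
  have "ennreal (K * h) = (\<integral>\<^sup>+x. ennreal K * indicator {c<..c+h} x \<partial>lborel)"
    using assms(2,3) by (simp add: nn_integral_cmult_indicator ennreal_mult)
  also have "\<dots> \<le> emeasure (laplace_measure b) {c<..c+h}"
    using assms(4) by (subst emeasure_laplace_measure)
      (auto intro!: nn_integral_mono ennreal_leI split: split_indicator)
  finally show ?thesis
    using assms(2,3) by (simp add: emeasure_eq_measure)
qed

abbreviation noise_except :: "nat \<Rightarrow> nat \<Rightarrow> real \<Rightarrow> (nat \<Rightarrow> real) measure" where
  "noise_except n i b \<equiv> PiM ({..<n} - {i}) (\<lambda>_. laplace_measure b)"

lemma prob_space_noise_measure: "0 < b \<Longrightarrow> prob_space (noise_measure n b)"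
  unfolding noise_measure_def by (intro prob_space_PiM prob_space_laplace_measure)

lemma prob_space_noise_except: "0 < b \<Longrightarrow> prob_space (noise_except n i b)"
  by (intro prob_space_PiM prob_space_laplace_measure)

lemma measurable_noise_component:
  "j \<in> I \<Longrightarrow> (\<lambda>w. w j) \<in> borel_measurable (PiM I (\<lambda>_. laplace_measure b))"
  using measurable_component_singleton[of j I "\<lambda>_. laplace_measure b"]
  by (simp add: measurable_def)

lemma measure_PiM_laplace_eq_integral:
  fixes I :: "'i set" and b :: real
  defines "L \<equiv> laplace_measure b"
  assumes b: "0 < b"
    and A: "{w \<in> space (PiM (insert i I) (\<lambda>_. L)). P w} \<in> sets (PiM (insert i I) (\<lambda>_. L))"
  shows "(\<lambda>X. measure L {x. P (X(i := x))}) \<in> borel_measurable (PiM I (\<lambda>_. L))"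
    and "measure (PiM (insert i I) (\<lambda>_. L)) {w \<in> space (PiM (insert i I) (\<lambda>_. L)). P w}
       = (\<integral>X. measure L {x. P (X(i := x))} \<partial>PiM I (\<lambda>_. L))"
proof -
  let ?X = "PiM I (\<lambda>_. L)" and ?N = "PiM (insert i I) (\<lambda>_. L)"
  let ?f = "\<lambda>(x, X). X(i := x)" and ?A = "{w \<in> space ?N. P w}"
  interpret L: prob_space L
    unfolding L_def using b by (rule prob_space_laplace_measure)
  interpret X: prob_space ?X
    by (rule prob_space_PiM) (rule L.prob_space_axioms)
  interpret LX: pair_sigma_finite L ?X ..
  have N: "?N = distr (L \<Otimes>\<^sub>M ?X) ?N ?f"
    by (rule distr_pair_PiM_eq_PiM[symmetric]) (rule L.prob_space_axioms)+
  have f: "?f \<in> measurable (L \<Otimes>\<^sub>M ?X) ?N"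
    by measurable
  let ?Q = "?f -` ?A \<inter> space (L \<Otimes>\<^sub>M ?X)"
  have Q: "?Q \<in> sets (L \<Otimes>\<^sub>M ?X)"
    using A f by (auto simp: measurable_def)
  have slice: "(\<lambda>x. (x, X)) -` ?Q = {x. P (X(i := x))}" if "X \<in> space ?X" for X
    using that unfolding L_def
    by (auto simp: space_pair_measure space_PiM PiE_def extensional_def Pi_def)
  have "(\<lambda>X. enn2real (emeasure L ((\<lambda>x. (x, X)) -` ?Q))) \<in> borel_measurable ?X"
    using LX.measurable_emeasure_Pair2[OF Q] by measurable
  then show meas: "(\<lambda>X. measure L {x. P (X(i := x))}) \<in> borel_measurable ?X"
    by (rule measurable_cong[THEN iffD1, rotated]) (simp only: slice measure_def)
  have "emeasure ?N ?A = emeasure (L \<Otimes>\<^sub>M ?X) ?Q"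
    using A by (subst N, subst emeasure_distr[OF f]) auto
  also have "\<dots> = (\<integral>\<^sup>+X. emeasure L ((\<lambda>x. (x, X)) -` ?Q) \<partial>?X)"
    by (rule LX.emeasure_pair_measure_alt2[OF Q])
  also have "\<dots> = (\<integral>\<^sup>+X. ennreal (measure L {x. P (X(i := x))}) \<partial>?X)"
    by (intro nn_integral_cong) (simp only: slice L.emeasure_eq_measure)
  also have "\<dots> = ennreal (\<integral>X. measure L {x. P (X(i := x))} \<partial>?X)"
    using meas by (intro nn_integral_eq_integral X.integrable_const_bound[where B=1]) auto
  finally show "measure ?N ?A = (\<integral>X. measure L {x. P (X(i := x))} \<partial>?X)"
    by (simp add: measure_def integral_nonneg_AE)
qed

lemma noise_measure_insert: "i < n \<Longrightarrow> noise_measure n b = PiM (insert i ({..<n} - {i})) (\<lambda>_. laplace_measure b)"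
  unfolding noise_measure_def by (simp add: insert_absorb)

lemma measure_noise_eq_integral:
  assumes "0 < b" "i < n"
    and "{w \<in> space (noise_measure n b). P w} \<in> sets (noise_measure n b)"
  shows "(\<lambda>X. measure (laplace_measure b) {x. P (X(i := x))}) \<in> borel_measurable (noise_except n i b)"
    and "measure (noise_measure n b) {w \<in> space (noise_measure n b). P w}
       = (\<integral>X. measure (laplace_measure b) {x. P (X(i := x))} \<partial>noise_except n i b)"
  using measure_PiM_laplace_eq_integral[of b i "{..<n} - {i}" P] assms
  unfolding noise_measure_insert[OF assms(2), symmetric] by auto

lemma sets_noise_le: "j < n \<Longrightarrow> {w \<in> space (noise_measure n b). w j \<le> a} \<in> sets (noise_measure n b)"
  using measurable_noise_component[of j "{..<n}" b] unfolding noise_measure_def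
  by (intro borel_measurable_le) auto

lemma sets_noise_ge: "j < n \<Longrightarrow> {w \<in> space (noise_measure n b). a \<le> w j} \<in> sets (noise_measure n b)"
  using measurable_noise_component[of j "{..<n}" b] unfolding noise_measure_def
  by (intro borel_measurable_le) auto

lemma sets_noise_tie:
  "k < n \<Longrightarrow> l < n \<Longrightarrow> {w \<in> space (noise_measure n b). w k + c = w l} \<in> sets (noise_measure n b)"
  using measurable_noise_component[of k "{..<n}" b] measurable_noise_component[of l "{..<n}" b]
  unfolding noise_measure_def by (intro borel_measurable_eq borel_measurable_add) auto

lemma sets_noise_wins:
  assumes "i < n"
  shows "{w \<in> space (noise_measure n b). \<forall>j<n. j \<noteq> i \<longrightarrow> q j + w j < q i + w i} \<in> sets (noise_measure n b)"
proof -
  have "{w \<in> space (noise_measure n b). \<forall>j<n. j \<noteq> i \<longrightarrow> q j + w j < q i + w i}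
    = space (noise_measure n b) \<inter> (\<Inter>j\<in>{..<n} - {i}. {w \<in> space (noise_measure n b). q j + w j < q i + w i})"
    by auto
  also have "\<dots> \<in> sets (noise_measure n b)"
  proof (cases "{..<n} - {i} = {}")
    case False
    have "{w \<in> space (noise_measure n b). q j + w j < q i + w i} \<in> sets (noise_measure n b)" if "j < n" for j
      using that assms measurable_noise_component[of j "{..<n}" b] measurable_noise_component[of i "{..<n}" b]
      unfolding noise_measure_def by (intro borel_measurable_less borel_measurable_add) auto
    with False show ?thesis
      by (intro sets.Int sets.top sets.finite_INT) auto
  qed (simp only: INT_empty Int_UNIV_right sets.top)
  finally show ?thesis .
qed

lemma measure_noise_ge:
  assumes b: "0 < b" and j: "j < n" and a: "0 \<le> a"
  shows "measure (noise_measure n b) {w \<in> space (noise_measure n b). a \<le> w j} = exp (- a / b) / 2"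
proof -
  interpret X: prob_space "noise_except n j b"
    using b by (rule prob_space_noise_except)
  have "measure (noise_measure n b) {w \<in> space (noise_measure n b). a \<le> w j}
     = (\<integral>X. measure (laplace_measure b) {a..} \<partial>noise_except n j b)"
    by (simp add: measure_noise_eq_integral(2)[OF b j sets_noise_ge[OF j]] atLeast_def)
  then show ?thesis
    using measure_laplace_atLeast[OF b a] by (simp add: X.prob_space)
qed

lemma measure_noise_le:
  assumes b: "0 < b" and j: "j < n" and a: "0 \<le> a"
  shows "measure (noise_measure n b) {w \<in> space (noise_measure n b). w j \<le> - a} = exp (- a / b) / 2"
proof -
  interpret X: prob_space "noise_except n j b"
    using b by (rule prob_space_noise_except)
  have "measure (noise_measure n b) {w \<in> space (noise_measure n b). w j \<le> - a}
     = (\<integral>X. measure (laplace_measure b) {..-a} \<partial>noise_except n j b)"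
    by (simp add: measure_noise_eq_integral(2)[OF b j sets_noise_le[OF j]] atMost_def)
  then show ?thesis
    using measure_laplace_atMost[OF b a] by (simp add: X.prob_space)
qed

lemma measure_noise_tie:
  assumes b: "0 < b" and "k < n" "l < n" "k \<noteq> l"
  shows "measure (noise_measure n b) {w \<in> space (noise_measure n b). w k + c = w l} = 0"
proof -
  have "{x. (X(k := x)) k + c = (X(k := x)) l} = {X l - c}" for X
    using \<open>k \<noteq> l\<close> by auto
  then show ?thesis
    using assms by (simp add: measure_noise_eq_integral(2)[OF b _ sets_noise_tie] measure_laplace_singleton)
qed

section \<open>Selection probabilities as Laplace tails\<close>

definition laplace_tail :: "real \<Rightarrow> real \<Rightarrow> real" where
  "laplace_tail b c = measure (laplace_measure b) {c<..}"

definition best_rival ::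
    "nat \<Rightarrow> nat \<Rightarrow> (nat \<Rightarrow> nat \<Rightarrow> real) \<Rightarrow> (nat \<Rightarrow> bool) \<Rightarrow> nat \<Rightarrow> (nat \<Rightarrow> real) \<Rightarrow> real" where
  "best_rival n m R y i X = Max ((\<lambda>j. total_score m (R j) y + X j) ` ({..<n} - {i}))"

lemma rivals_nonempty: "2 \<le> n \<Longrightarrow> {..<n} - {i :: nat} \<noteq> {}"
proof
  assume "2 \<le> n" "{..<n} - {i} = {}"
  then have "0 \<in> {i}" "1 \<in> {i}"
    by (metis Diff_iff empty_iff lessThan_iff less_le_trans one_less_numeral_iff semiring_norm(76)
        zero_less_numeral)+
  then show False
    by simp
qed

lemma best_rival_fun_upd_self: "best_rival n m (R(i := r)) y i X = best_rival n m R y i X"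
  unfolding best_rival_def by (intro arg_cong[where f=Max] image_cong) auto

lemma rnm_select_eq_integral:
  assumes b: "0 < b" and i: "i < n" and n: "2 \<le> n"
  shows "(\<lambda>X. laplace_tail b (best_rival n m R y i X - total_score m (R i) y))
           \<in> borel_measurable (noise_except n i b)"
    and "rnm_select n m b R y i
           = (\<integral>X. laplace_tail b (best_rival n m R y i X - total_score m (R i) y) \<partial>noise_except n i b)"
proof -
  define c where "c X = best_rival n m R y i X - total_score m (R i) y" for X
  have "{..<n} - {i} \<noteq> {}"
    using n by (rule rivals_nonempty)
  then have "(\<forall>j<n. j \<noteq> i \<longrightarrow> total_score m (R j) y + (X(i := x)) j
                        < total_score m (R i) y + (X(i := x)) i) \<longleftrightarrow> c X < x" for X x
    unfolding c_def best_rival_def by (subst diff_less_eq, subst Max_less_iff) (auto simp: ac_simps)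
  then have slice: "{x. \<forall>j<n. j \<noteq> i \<longrightarrow> total_score m (R j) y + (X(i := x)) j
                                    < total_score m (R i) y + (X(i := x)) i} = {c X<..}" for X
    by auto
  note fubini = measure_noise_eq_integral[OF b i sets_noise_wins[OF i, of b "\<lambda>j. total_score m (R j) y"]]
  show "(\<lambda>X. laplace_tail b (c X)) \<in> borel_measurable (noise_except n i b)"
    using fubini(1) unfolding slice laplace_tail_def .
  show "rnm_select n m b R y i = (\<integral>X. laplace_tail b (c X) \<partial>noise_except n i b)"
    using fubini(2) unfolding slice laplace_tail_def rnm_select_def .
qed

lemma laplace_tail_diff:
  assumes "0 < b" "0 \<le> d"
  shows "laplace_tail b c - laplace_tail b (c + d) = measure (laplace_measure b) {c<..c+d}"
proof -
  interpret prob_space "laplace_measure b"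
    using assms(1) by (rule prob_space_laplace_measure)
  have "{c<..} = {c<..c+d} \<union> {c+d<..}"
    using assms(2) by auto
  then have "laplace_tail b c = measure (laplace_measure b) ({c<..c+d} \<union> {c+d<..})"
    by (simp add: laplace_tail_def)
  also have "\<dots> = measure (laplace_measure b) {c<..c+d} + laplace_tail b (c + d)"
    unfolding laplace_tail_def by (rule finite_measure_Union) auto
  finally show ?thesis
    by simp
qed

lemma laplace_tail_bounds: "0 < b \<Longrightarrow> 0 \<le> laplace_tail b c \<and> laplace_tail b c \<le> 1"
  unfolding laplace_tail_def using prob_space.prob_le_1[OF prob_space_laplace_measure] by simp

lemma laplace_tail_drop_ge:
  assumes b: "0 < b" and "0 < Dg" "\<bar>cg - cn\<bar> \<le> 2"
  shows "laplace_density b cn * exp (- (2 + Dg) / b) * Dg \<le> laplace_tail b (cg - Dg) - laplace_tail b cg"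
proof -
  let ?f = "laplace_density b"
  have "?f cn * exp (- (2 + Dg) / b) \<le> ?f x" if "x \<in> {cg - Dg<..cg - Dg + Dg}" for x
  proof -
    have "\<bar>x - cn\<bar> \<le> 2 + Dg"
      using that assms(3) by auto
    then have "\<bar>x - cn\<bar> / b \<le> (2 + Dg) / b"
      using b by (simp add: divide_right_mono)
    then have "exp (- (2 + Dg) / b) \<le> exp (- \<bar>x - cn\<bar> / b)"
      by (simp only: minus_divide_left exp_le_cancel_iff neg_le_iff_le)
    then have "?f cn * exp (- (2 + Dg) / b) \<le> ?f cn * exp (- \<bar>x - cn\<bar> / b)"
      using laplace_density_pos[OF b, of cn] by simp
    also have "\<dots> \<le> ?f x"
      using b by (rule laplace_density_mult_exp_le)
    finally show ?thesis .
  qed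
  then have "?f cn * exp (- (2 + Dg) / b) * Dg \<le> measure (laplace_measure b) {cg - Dg<..cg - Dg + Dg}"
    using assms(2) laplace_density_pos[OF b, of cn] b by (intro measure_laplace_Ioc_ge) auto
  then show ?thesis
    using laplace_tail_diff[OF b, of Dg "cg - Dg"] assms(2) by simp
qed

lemma laplace_tail_drop_le:
  assumes b: "0 < b" and d: "0 \<le> d"
  shows "laplace_tail b cn - laplace_tail b (cn + d) \<le> laplace_density b cn * exp (d / b) * d"
proof -
  let ?f = "laplace_density b"
  have "?f x \<le> ?f cn * exp (d / b)" if "x \<in> {cn<..cn+d}" for x
  proof -
    have "?f x * exp (- \<bar>cn - x\<bar> / b) \<le> ?f cn"
      using b by (rule laplace_density_mult_exp_le)
    then have "?f x \<le> ?f cn * exp (\<bar>cn - x\<bar> / b)"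
      by (simp add: exp_minus field_simps)
    also have "\<dots> \<le> ?f cn * exp (d / b)"
      using that b laplace_density_pos[OF b, of cn] by (intro mult_left_mono) (auto simp: divide_right_mono)
    finally show ?thesis .
  qed
  then have "measure (laplace_measure b) {cn<..cn+d} \<le> ?f cn * exp (d / b) * d"
    using b d laplace_density_pos[OF b, of cn] by (intro measure_laplace_Ioc_le) auto
  then show ?thesis
    using laplace_tail_diff[OF b d] by simp
qed

lemma laplace_tail_tradeoff:
  assumes b: "0 < b" and "0 < Dg" "0 \<le> d" "\<bar>cg - cn\<bar> \<le> 2" "0 \<le> pg" "0 \<le> pn"
    and tradeoff: "pn * d * exp (d / b) < pg * Dg * exp (- (2 + Dg) / b)"
  shows "pn * (laplace_tail b cn - laplace_tail b (cn + d))
       < pg * (laplace_tail b (cg - Dg) - laplace_tail b cg)"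
proof -
  let ?f = "laplace_density b"
  have "pn * (laplace_tail b cn - laplace_tail b (cn + d)) \<le> ?f cn * (pn * d * exp (d / b))"
    using mult_left_mono[OF laplace_tail_drop_le[OF b assms(3)] assms(6)] by (simp add: ac_simps)
  also have "\<dots> < ?f cn * (pg * Dg * exp (- (2 + Dg) / b))"
    using tradeoff laplace_density_pos[OF b] by simp
  also have "\<dots> \<le> pg * (laplace_tail b (cg - Dg) - laplace_tail b cg)"
    using mult_left_mono[OF laplace_tail_drop_ge[OF b assms(2,4)] assms(5)] by (simp add: ac_simps)
  finally show ?thesis .
qed

section \<open>Undominated reports are close to beliefs\<close>

lemma quad_score_True_minus_False: "quad_score r True - quad_score r False = 2 * r - 1"
  by (simp add: quad_score_def power2_eq_square algebra_simps)

lemma total_score_fun_upd_outcome: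
  "t < m \<Longrightarrow> total_score m r (z(t := u))
     = (\<Sum>s\<in>{..<m} - {t}. quad_score (r s) (z s)) + quad_score (r t) u"
  unfolding total_score_def by (subst sum.remove[of _ t]) (auto intro!: sum.cong)

lemma total_score_fun_upd_report:
  "t < m \<Longrightarrow> total_score m (r(t := v)) y
     = total_score m r y + (quad_score v (y t) - quad_score (r t) (y t))"
proof -
  assume t: "t < m"
  have "total_score m (r(t := v)) y = quad_score v (y t) + (\<Sum>s\<in>{..<m} - {t}. quad_score (r s) (y s))"
    unfolding total_score_def using t by (subst sum.remove[of _ t]) (auto intro!: sum.cong)
  moreover have "total_score m r y = quad_score (r t) (y t) + (\<Sum>s\<in>{..<m} - {t}. quad_score (r s) (y s))"
    unfolding total_score_def using t by (subst sum.remove[of _ t]) auto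
  ultimately show ?thesis
    by simp
qed

lemma abs_Max_image_diff_le:
  fixes f g :: "'a \<Rightarrow> real"
  assumes "finite S" "S \<noteq> {}" "\<And>j. j \<in> S \<Longrightarrow> \<bar>f j - g j\<bar> \<le> e"
  shows "\<bar>Max (f ` S) - Max (g ` S)\<bar> \<le> e"
proof -
  have le: "Max (f ` S) \<le> Max (g ` S) + e"
    if "\<And>j. j \<in> S \<Longrightarrow> \<bar>f j - g j\<bar> \<le> e" for f g :: "'a \<Rightarrow> real"
  proof -
    have "Max (f ` S) \<in> f ` S"
      using assms(1,2) by (intro Max_in) auto
    then obtain j where j: "j \<in> S" "Max (f ` S) = f j"
      by auto
    have "g j \<le> Max (g ` S)"
      using assms(1) j(1) by (intro Max_ge) auto
    then show ?thesis
      using j that[OF j(1)] by linarith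
  qed
  have "Max (f ` S) \<le> Max (g ` S) + e"
    by (rule le) (rule assms(3))
  moreover have "Max (g ` S) \<le> Max (f ` S) + e"
    by (rule le) (simp add: abs_minus_commute assms(3))
  ultimately show ?thesis
    by linarith
qed

lemma best_rival_outcome_shift:
  assumes "t < m" "report_matrix n m R" "2 \<le> n" "i < n"
  shows "\<bar>best_rival n m R (z(t := True)) i X - best_rival n m R (z(t := False)) i X\<bar> \<le> 1"
  unfolding best_rival_def
proof (rule abs_Max_image_diff_le)
  show "{..<n} - {i} \<noteq> {}"
    using assms(3) by (rule rivals_nonempty)
  fix j assume "j \<in> {..<n} - {i}"
  then have "0 \<le> R j t" "R j t \<le> 1"
    using assms(1,2) by (auto simp: report_matrix_def unit_vec_def)
  then show "\<bar>total_score m (R j) (z(t := True)) + X j - (total_score m (R j) (z(t := False)) + X j)\<bar> \<le> 1"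
    using quad_score_True_minus_False[of "R j t"] by (simp add: total_score_fun_upd_outcome[OF assms(1)])
qed simp

definition outcome_prob_except :: "nat \<Rightarrow> nat \<Rightarrow> (nat \<Rightarrow> real) \<Rightarrow> (nat \<Rightarrow> bool) \<Rightarrow> real" where
  "outcome_prob_except m t p z = (\<Prod>s\<in>{..<m} - {t}. if z s then p s else 1 - p s)"

lemma outcome_prob_fun_upd:
  "t < m \<Longrightarrow> outcome_prob m p (z(t := u)) = (if u then p t else 1 - p t) * outcome_prob_except m t p z"
  unfolding outcome_prob_def outcome_prob_except_def by (subst prod.remove[of _ t]) (auto intro!: prod.cong)

lemma outcome_prob_except_nonneg: "unit_vec m p \<Longrightarrow> 0 \<le> outcome_prob_except m t p z"
  unfolding outcome_prob_except_def unit_vec_def by (intro prod_nonneg) auto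

lemma sum_outcome_prob_except: "(\<Sum>z\<in>PiE ({..<m} - {t}) (\<lambda>_. UNIV). outcome_prob_except m t p z) = 1"
  unfolding outcome_prob_except_def by (subst prod_sum_PiE[symmetric]) (auto simp: UNIV_bool)

lemma sum_outcomes_split_coordinate:
  fixes F :: "(nat \<Rightarrow> bool) \<Rightarrow> real"
  assumes t: "t < m"
  shows "(\<Sum>y\<in>outcomes m. F y) = (\<Sum>z\<in>PiE ({..<m} - {t}) (\<lambda>_. UNIV). F (z(t := True)) + F (z(t := False)))"
proof -
  have "(\<Sum>y\<in>outcomes m. F y) = (\<Sum>(u, z)\<in>UNIV \<times> PiE ({..<m} - {t}) (\<lambda>_. UNIV). F (z(t := u)))"
    unfolding outcomes_def
  proof (rule sum.reindex_bij_witness[of _ "\<lambda>(u, z). z(t := u)" "\<lambda>y. (y t, y(t := undefined))"])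
    fix uz :: "bool \<times> (nat \<Rightarrow> bool)"
    assume uz: "uz \<in> UNIV \<times> PiE ({..<m} - {t}) (\<lambda>_. UNIV)"
    then have "snd uz t = undefined"
      by (auto simp: PiE_def extensional_def)
    then have "(snd uz)(t := undefined) = snd uz"
      by (rule fun_upd_idem)
    with uz t show "(case uz of (u, z) \<Rightarrow> z(t := u)) \<in> PiE {..<m} (\<lambda>_. UNIV)"
      and "((case uz of (u, z) \<Rightarrow> z(t := u)) t, (case uz of (u, z) \<Rightarrow> z(t := u))(t := undefined)) = uz"
      by (auto simp: PiE_def extensional_def split: prod.splits)
  qed (auto simp: PiE_def extensional_def)
  also have "\<dots> = (\<Sum>z\<in>PiE ({..<m} - {t}) (\<lambda>_. UNIV). F (z(t := True)) + F (z(t := False)))"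
    by (simp add: sum.cartesian_product[symmetric] UNIV_bool sum.distrib)
  finally show ?thesis .
qed

lemma sum_weighted_pos:
  fixes w f :: "'a \<Rightarrow> real"
  assumes "finite Z" "\<And>z. z \<in> Z \<Longrightarrow> 0 \<le> w z" "sum w Z = 1" "\<And>z. z \<in> Z \<Longrightarrow> 0 < f z"
  shows "0 < (\<Sum>z\<in>Z. w z * f z)"
proof -
  obtain z where "z \<in> Z" "w z \<noteq> 0"
    using assms(3) by (metis sum.neutral zero_neq_one)
  with assms show ?thesis
    by (intro sum_pos2[of _ z]) (auto intro: less_imp_le simp: less_le)
qed

text \<open>Fix all other outcomes and the rivals' noise: revealing \<open>y t\<close> moves the gap
  to the best rival by at most 2, so the tradeoff for the Laplace tail applies pointwise.\<close>

lemma rnm_select_report_coordinate_gain: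
  fixes R :: "nat \<Rightarrow> nat \<Rightarrow> real" and r p :: "nat \<Rightarrow> real" and g :: bool and v :: real
  assumes b: "0 < b" and n: "2 \<le> n" and i: "i < n" and t: "t < m"
    and R: "report_matrix n m R" and p: "unit_vec m p" and rt: "0 \<le> r t" "r t \<le> 1"
  defines "D \<equiv> \<lambda>u. quad_score v u - quad_score (r t) u"
    and "pw \<equiv> \<lambda>u. if u then p t else 1 - p t"
  assumes gain: "0 < D g" and loss: "D (\<not> g) \<le> 0"
    and tradeoff: "pw (\<not> g) * - D (\<not> g) * exp (- D (\<not> g) / b) < pw g * D g * exp (- (2 + D g) / b)"
  shows "0 < (\<Sum>u\<in>UNIV. pw u * (rnm_select n m b (R(i := r(t := v))) (z(t := u)) i
                                   - rnm_select n m b (R(i := r)) (z(t := u)) i))"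
proof -
  let ?X = "noise_except n i b"
  let ?old = "\<lambda>y. rnm_select n m b (R(i := r)) y i"
  let ?new = "\<lambda>y. rnm_select n m b (R(i := r(t := v))) y i"
  interpret X: prob_space ?X
    using b by (rule prob_space_noise_except)
  define c where "c y X = best_rival n m R y i X - total_score m r y" for y X
  have score_new: "total_score m (r(t := v)) y = total_score m r y + D (y t)" for y
    by (simp add: total_score_fun_upd_report[OF t] D_def)
  have old: "?old y = (\<integral>X. laplace_tail b (c y X) \<partial>?X)"
    and meas_old: "(\<lambda>X. laplace_tail b (c y X)) \<in> borel_measurable ?X" for y
    using rnm_select_eq_integral[OF b i n, of m "R(i := r)" y]
    by (simp_all add: best_rival_fun_upd_self c_def)
  have new: "?new y = (\<integral>X. laplace_tail b (c y X - D (y t)) \<partial>?X)"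
    and meas_new: "(\<lambda>X. laplace_tail b (c y X - D (y t))) \<in> borel_measurable ?X" for y
    using rnm_select_eq_integral[OF b i n, of m "R(i := r(t := v))" y]
    by (simp_all add: best_rival_fun_upd_self c_def score_new diff_diff_eq)
  have int_old: "integrable ?X (\<lambda>X. laplace_tail b (c y X))"
    and int_new: "integrable ?X (\<lambda>X. laplace_tail b (c (y(t := u)) X - D u))" for y u
    using meas_old meas_new[of "y(t := u)"] laplace_tail_bounds[OF b]
    by (auto intro!: X.integrable_const_bound[where B=1])
  define G where "G z X = (\<Sum>u\<in>UNIV. pw u * (laplace_tail b (c (z(t := u)) X - D u)
                                             - laplace_tail b (c (z(t := u)) X)))" for z X
  have G_pos: "0 < G z X" for z X
  proof -
    have "\<bar>c (z(t := g)) X - c (z(t := \<not> g)) X\<bar> \<le> 2"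
      using best_rival_outcome_shift[OF t R n i, of z X] quad_score_True_minus_False[of "r t"] rt
      by (cases g) (auto simp: c_def total_score_fun_upd_outcome[OF t])
    then have "pw (\<not> g) * (laplace_tail b (c (z(t := \<not> g)) X) - laplace_tail b (c (z(t := \<not> g)) X + - D (\<not> g)))
             < pw g * (laplace_tail b (c (z(t := g)) X - D g) - laplace_tail b (c (z(t := g)) X))"
      using gain loss tradeoff p t
      by (intro laplace_tail_tradeoff[OF b]) (auto simp: pw_def unit_vec_def)
    then show ?thesis
      unfolding G_def by (cases g) (simp_all add: UNIV_bool algebra_simps)
  qed
  have int_G: "(\<integral>X. G z X \<partial>?X) = (\<Sum>u\<in>UNIV. pw u * (?new (z(t := u)) - ?old (z(t := u))))"
    unfolding G_def old new using int_old int_new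
    by (simp add: Bochner_Integration.integral_sum Bochner_Integration.integral_diff)
  have "(\<integral>X. 0 \<partial>?X) < (\<integral>X. G z X \<partial>?X)"
    using G_pos int_old int_new unfolding G_def
    by (intro X.integral_less_AE_space) (auto simp: X.emeasure_space_1)
  then show ?thesis
    by (simp add: int_G)
qed

lemma rnm_expected_report_coordinate_less:
  fixes R :: "nat \<Rightarrow> nat \<Rightarrow> real" and r p :: "nat \<Rightarrow> real" and g :: bool and v :: real
  assumes b: "0 < b" and n: "2 \<le> n" and i: "i < n" and t: "t < m"
    and R: "report_matrix n m R" and p: "unit_vec m p" and rt: "0 \<le> r t" "r t \<le> 1"
  defines "D \<equiv> \<lambda>u. quad_score v u - quad_score (r t) u"
    and "pw \<equiv> \<lambda>u. if u then p t else 1 - p t"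
  assumes gain: "0 < D g" and loss: "D (\<not> g) \<le> 0"
    and tradeoff: "pw (\<not> g) * - D (\<not> g) * exp (- D (\<not> g) / b) < pw g * D g * exp (- (2 + D g) / b)"
  shows "rnm_expected n m b (R(i := r)) p i < rnm_expected n m b (R(i := r(t := v))) p i"
proof -
  let ?Z = "PiE ({..<m} - {t}) (\<lambda>_. UNIV :: bool set)"
  let ?old = "\<lambda>y. rnm_select n m b (R(i := r)) y i"
  let ?new = "\<lambda>y. rnm_select n m b (R(i := r(t := v))) y i"
  have "0 < (\<Sum>z\<in>?Z. outcome_prob_except m t p z
                        * (\<Sum>u\<in>UNIV. pw u * (?new (z(t := u)) - ?old (z(t := u)))))"
    using outcome_prob_except_nonneg[OF p] sum_outcome_prob_except
      rnm_select_report_coordinate_gain[where r = r and g = g, OF b n i t R p rt gain[unfolded D_def] loss[unfolded D_def]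
        tradeoff[unfolded D_def pw_def]]
    unfolding pw_def
    by (intro sum_weighted_pos[where w = "outcome_prob_except m t p"]) (auto intro: finite_PiE)
  also have "\<dots> = (\<Sum>y\<in>outcomes m. outcome_prob m p y * (?new y - ?old y))"
    unfolding sum_outcomes_split_coordinate[OF t]
    by (intro sum.cong refl) (simp add: outcome_prob_fun_upd[OF t] UNIV_bool pw_def algebra_simps)
  also have "\<dots> = rnm_expected n m b (R(i := r(t := v))) p i - rnm_expected n m b (R(i := r)) p i"
    unfolding rnm_expected_def by (simp add: sum_subtractf algebra_simps)
  finally show ?thesis
    by simp
qed


lemma midpoint_gain_weighted_le:
  fixes p r h :: real
  assumes "0 \<le> p" "p \<le> 1" "r = p - 2 * h" "0 < h" "h \<le> 1 / 2"
  shows "p * (h * (2 - 2 * r - h)) \<le> 2 * h"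
proof -
  have "2 * p * (1 - p) \<le> 1 / 2"
    using zero_le_power2[of "2 * p - 1"] by (simp add: power2_eq_square algebra_simps)
  moreover have "p * h \<le> 1 * (1 / 2)"
    using assms by (intro mult_mono) auto
  moreover have "p * (2 - 2 * r - h) = 2 * p * (1 - p) + 3 * (p * h)"
    unfolding assms(3) by (simp add: algebra_simps)
  ultimately have "p * (2 - 2 * r - h) \<le> 2"
    by linarith
  then have "h * (p * (2 - 2 * r - h)) \<le> h * 2"
    using assms(4) by (intro mult_left_mono) auto
  then show ?thesis
    by (simp add: algebra_simps)
qed

text \<open>With \<open>A\<close> the loss and \<open>B\<close> the gain of moving a report \<open>r = p - 2 h\<close> to \<open>r + h\<close>, one has
  \<open>p B - (1 - p) A = 3 h\<^sup>2\<close>, which beats the distortion factors \<open>exp (O(1/b))\<close> once \<open>h > 3/b\<close>.\<close>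

lemma midpoint_move_tradeoff:
  fixes p r b h :: real
  assumes b: "0 < b" and p: "0 \<le> p" "p \<le> 1" and r: "0 \<le> r" and h: "r = p - 2 * h" and hb: "3 / b < h"
  shows "(1 - p) * (h * (2 * r + h)) * exp (h * (2 * r + h) / b)
       < p * (h * (2 - 2 * r - h)) * exp (- (2 + h * (2 - 2 * r - h)) / b)"
proof -
  define A where "A = h * (2 * r + h)"
  define B where "B = h * (2 - 2 * r - h)"
  define x where "x = (2 + B + A) / b"
  have h0: "0 < h"
    using hb b by (meson divide_pos_pos less_trans zero_less_numeral)
  have h1: "h \<le> 1 / 2"
    using h p r by linarith
  have A0: "0 \<le> A"
    using h0 r unfolding A_def by simp
  have B0: "0 \<le> B"
    using h0 h1 h p unfolding B_def by (intro mult_nonneg_nonneg) auto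
  have pB: "p * B \<le> 2 * h"
    unfolding B_def using p h h0 h1 by (rule midpoint_gain_weighted_le)
  have "A + B \<le> 5 * h"
    using h0 unfolding A_def B_def by (simp add: algebra_simps)
  then have "x \<le> (2 + 5 * h) / b"
    unfolding x_def using b by (simp add: divide_right_mono)
  moreover have "0 \<le> x"
    unfolding x_def using A0 B0 b by simp
  ultimately have "p * B * x \<le> 2 * h * ((2 + 5 * h) / b)"
    using pB h0 by (intro mult_mono[OF pB]) auto
  also have "\<dots> \<le> 2 * h * (9 / 2 / b)"
    using h1 h0 b by (intro mult_left_mono divide_right_mono) auto
  also have "\<dots> = 3 * h * (3 / b)"
    by simp
  also have "\<dots> < 3 * h * h"
    using hb h0 by (intro mult_strict_left_mono) auto
  finally have "p * B * x < p * B - (1 - p) * A"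
    unfolding A_def B_def h by (simp add: algebra_simps)
  then have "(1 - p) * A < p * B * (1 - x)"
    by (simp add: algebra_simps)
  also have "\<dots> \<le> p * B * exp (- x)"
    using mult_nonneg_nonneg[OF p(1) B0] exp_ge_add_one_self[of "- x"] by (intro mult_left_mono) auto
  finally have "(1 - p) * A * exp (A / b) < p * B * exp (- x) * exp (A / b)"
    by simp
  also have "p * B * exp (- x) * exp (A / b) = p * B * exp (- (2 + B) / b)"
    unfolding x_def mult.assoc exp_add[symmetric] using b by (simp add: field_simps)
  finally show ?thesis
    unfolding A_def B_def .
qed

lemma strictly_dominates_move_toward_belief:
  assumes b: "0 < b" and n: "2 \<le> n" and i: "i < n" and t: "t < m"
    and r: "unit_vec m r" and p: "unit_vec m p" and far: "6 / b < \<bar>r t - p t\<bar>"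
  shows "strictly_dominates n m b i p (r(t := (r t + p t) / 2)) r"
  unfolding strictly_dominates_def
proof (intro allI impI)
  fix R
  assume R: "report_matrix n m R"
  \<comment> \<open>Relative to the outcome \<open>g\<close> favoured by the move, belief and report become \<open>pg\<close> and
    \<open>rg = pg - 2 h\<close>, so both directions of the move are the same case.\<close>
  define g where "g = (r t < p t)"
  define h where "h = \<bar>r t - p t\<bar> / 2"
  define pg where "pg = (if g then p t else 1 - p t)"
  define rg where "rg = (if g then r t else 1 - r t)"
  let ?v = "(r t + p t) / 2"
  have bounds: "0 \<le> r t" "r t \<le> 1" "0 \<le> p t" "p t \<le> 1"
    using r p t by (auto simp: unit_vec_def)
  have h: "3 / b < h"
    using far unfolding h_def by (simp add: field_simps)
  then have h0: "0 < h"
    using b by (meson divide_pos_pos less_trans zero_less_numeral)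
  have rg: "rg = pg - 2 * h" "0 \<le> rg" "0 \<le> pg" "pg \<le> 1"
    using bounds unfolding rg_def pg_def h_def g_def by auto
  have gain: "quad_score ?v g - quad_score (r t) g = h * (2 - 2 * rg - h)"
    and loss: "quad_score ?v (\<not> g) - quad_score (r t) (\<not> g) = - (h * (2 * rg + h))"
    unfolding quad_score_def rg_def h_def g_def by (auto simp: power2_eq_square field_simps)
  show "rnm_expected n m b (R(i := r)) p i < rnm_expected n m b (R(i := r(t := ?v))) p i"
  proof (rule rnm_expected_report_coordinate_less[where r = r and g = g, OF b n i t R p bounds(1,2)])
    show "0 < quad_score ?v g - quad_score (r t) g"
      unfolding gain using h0 rg by (intro mult_pos_pos) auto
    show "quad_score ?v (\<not> g) - quad_score (r t) (\<not> g) \<le> 0"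
      unfolding loss using h0 rg by simp
    show "(if \<not> g then p t else 1 - p t) * - (quad_score ?v (\<not> g) - quad_score (r t) (\<not> g))
            * exp (- (quad_score ?v (\<not> g) - quad_score (r t) (\<not> g)) / b)
          < (if g then p t else 1 - p t) * (quad_score ?v g - quad_score (r t) g)
            * exp (- (2 + (quad_score ?v g - quad_score (r t) g)) / b)"
      using midpoint_move_tradeoff[OF b rg(3,4,2,1) h]
      unfolding gain loss pg_def by (cases g) simp_all
  qed
qed

lemma undominated_report_close:
  assumes "0 < b" "2 \<le> n" "i < n" "t < m"
    and "undominated n m b i p r" "unit_vec m r" "unit_vec m p"
  shows "\<bar>r t - p t\<bar> \<le> 6 / b"
proof (rule ccontr)
  assume "\<not> ?thesis"
  then have "strictly_dominates n m b i p (r(t := (r t + p t) / 2)) r"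
    using assms by (intro strictly_dominates_move_toward_belief) auto
  moreover have "0 \<le> r t" "r t \<le> 1" "0 \<le> p t" "p t \<le> 1"
    using assms(4,6,7) by (auto simp: unit_vec_def)
  then have "unit_vec m (r(t := (r t + p t) / 2))"
    using assms(6) by (auto simp: unit_vec_def)
  ultimately show False
    using assms(5) unfolding undominated_def by blast
qed

section \<open>Concentration of the scores\<close>

definition outcome_pmf :: "nat \<Rightarrow> (nat \<Rightarrow> real) \<Rightarrow> (nat \<Rightarrow> bool) pmf" where
  "outcome_pmf m \<theta> = Pi_pmf {..<m} undefined (\<lambda>t. bernoulli_pmf (\<theta> t))"

lemma finite_outcomes: "finite (outcomes m)"
  unfolding outcomes_def by (intro finite_PiE) auto

lemma set_pmf_outcome_pmf: "set_pmf (outcome_pmf m \<theta>) \<subseteq> outcomes m"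
  using set_Pi_pmf_subset[of "{..<m}" undefined "\<lambda>t. bernoulli_pmf (\<theta> t)"]
  unfolding outcome_pmf_def outcomes_def by (auto simp: PiE_def extensional_def)

lemma pmf_outcome_pmf:
  assumes "unit_vec m \<theta>" "y \<in> outcomes m"
  shows "pmf (outcome_pmf m \<theta>) y = outcome_prob m \<theta> y"
  using assms unfolding outcome_pmf_def outcome_prob_def
  by (subst pmf_Pi') (auto simp: outcomes_def PiE_def extensional_def unit_vec_def intro!: prod.cong)

lemma expectation_outcome_pmf:
  "unit_vec m \<theta> \<Longrightarrow>
    measure_pmf.expectation (outcome_pmf m \<theta>) f = (\<Sum>y\<in>outcomes m. outcome_prob m \<theta> y * f y)"
  using set_pmf_outcome_pmf[of m \<theta>]
  by (subst integral_measure_pmf[OF finite_outcomes]) (auto simp: pmf_outcome_pmf)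

lemma expectation_outcome_pmf_component:
  assumes "unit_vec m \<theta>" "t < m"
  shows "measure_pmf.expectation (outcome_pmf m \<theta>) (\<lambda>y. f (y t)) = \<theta> t * f True + (1 - \<theta> t) * f False"
proof -
  have "measure_pmf.expectation (outcome_pmf m \<theta>) (\<lambda>y. f (y t))
      = measure_pmf.expectation (map_pmf (\<lambda>y. y t) (outcome_pmf m \<theta>)) f"
    by simp
  also have "\<dots> = measure_pmf.expectation (bernoulli_pmf (\<theta> t)) f"
    using assms(2) by (simp add: outcome_pmf_def Pi_pmf_component)
  finally show ?thesis
    using assms by (simp add: unit_vec_def ac_simps)
qed

lemma outcome_pmf_hoeffding:
  fixes g :: "nat \<Rightarrow> bool \<Rightarrow> real"
  assumes \<theta>: "unit_vec m \<theta>" and g: "\<And>t. t < m \<Longrightarrow> \<bar>g t True - g t False\<bar> \<le> 1"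
    and m: "0 < m" and x: "0 \<le> x"
  shows "measure_pmf.prob (outcome_pmf m \<theta>)
           {y. x \<le> \<bar>(\<Sum>t<m. g t (y t)) - (\<Sum>t<m. \<theta> t * g t True + (1 - \<theta> t) * g t False)\<bar>}
         \<le> 2 * exp (- 2 * x\<^sup>2 / m)"
proof -
  let ?M = "outcome_pmf m \<theta>"
  define a where "a t = min (g t True) (g t False)" for t
  interpret Hoeffding_ineq ?M "{..<m}" "\<lambda>t y. g t (y t)" a "\<lambda>t. a t + 1"
    "\<Sum>t<m. measure_pmf.expectation ?M (\<lambda>y. g t (y t))"
  proof unfold_locales
    show "prob_space.indep_vars ?M (\<lambda>_. borel) (\<lambda>t y. g t (y t)) {..<m}"
      unfolding outcome_pmf_def
      by (intro prob_space.indep_vars_compose2[OF _ indep_vars_Pi_pmf])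
        (auto simp: measure_pmf.prob_space_axioms)
    fix t assume "t \<in> {..<m}"
    show "AE y in ?M. g t (y t) \<in> {a t..a t + 1}"
    proof (intro AE_I2)
      fix y :: "nat \<Rightarrow> bool"
      show "g t (y t) \<in> {a t..a t + 1}"
        using g[of t] \<open>t \<in> {..<m}\<close> by (cases "y t") (auto simp: a_def)
    qed
  qed simp_all
  have "(\<Sum>t<m. measure_pmf.expectation ?M (\<lambda>y. g t (y t)))
      = (\<Sum>t<m. \<theta> t * g t True + (1 - \<theta> t) * g t False)"
    using \<theta> by (intro sum.cong refl expectation_outcome_pmf_component) auto
  then show ?thesis
    using Hoeffding_ineq_abs_ge[OF x] m by simp
qed

definition expected_total_score :: "nat \<Rightarrow> (nat \<Rightarrow> real) \<Rightarrow> (nat \<Rightarrow> real) \<Rightarrow> real" where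
  "expected_total_score m \<theta> r = (\<Sum>t<m. \<theta> t * quad_score (r t) True + (1 - \<theta> t) * quad_score (r t) False)"

lemma expected_quad_score:
  "\<theta> * quad_score r True + (1 - \<theta>) * quad_score r False = 1 - \<theta> * (1 - \<theta>) - (r - \<theta>)\<^sup>2"
  unfolding quad_score_def by (simp add: power2_eq_square algebra_simps)

lemma abs_diff_power2_le:
  fixes r p \<theta> :: real
  assumes "0 \<le> r" "r \<le> 1" "0 \<le> p" "p \<le> 1" "0 \<le> \<theta>" "\<theta> \<le> 1"
  shows "\<bar>(r - \<theta>)\<^sup>2 - (p - \<theta>)\<^sup>2\<bar> \<le> 2 * \<bar>r - p\<bar>"
proof -
  have "(r - \<theta>)\<^sup>2 - (p - \<theta>)\<^sup>2 = (r - p) * (r + p - 2 * \<theta>)"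
    by (simp add: power2_eq_square algebra_simps)
  moreover have "\<bar>r - p\<bar> * \<bar>r + p - 2 * \<theta>\<bar> \<le> \<bar>r - p\<bar> * 2"
    using assms by (intro mult_left_mono) auto
  ultimately show ?thesis
    by (simp add: abs_mult mult.commute)
qed

text \<open>Up to the forecaster-independent term \<open>\<Sum>t<m. \<theta> t * (1 - \<theta> t)\<close>, the expected quadratic
  score is \<open>m\<close> times the accuracy of the report, which is close to that of a nearby belief.\<close>

lemma expected_total_score_close_accuracy:
  assumes "unit_vec m r" "unit_vec m p" "unit_vec m \<theta>" "\<And>t. t < m \<Longrightarrow> \<bar>r t - p t\<bar> \<le> \<beta>"
  shows "\<bar>expected_total_score m \<theta> r - (real m * accuracy m p \<theta> - (\<Sum>t<m. \<theta> t * (1 - \<theta> t)))\<bar>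
         \<le> 2 * \<beta> * real m"
proof -
  have acc: "real m * accuracy m p \<theta> = (\<Sum>t<m. 1 - (p t - \<theta> t)\<^sup>2)"
    by (cases "m = 0") (simp_all add: accuracy_def sum_subtractf algebra_simps)
  have "expected_total_score m \<theta> r - (real m * accuracy m p \<theta> - (\<Sum>t<m. \<theta> t * (1 - \<theta> t)))
      = (\<Sum>t<m. (p t - \<theta> t)\<^sup>2 - (r t - \<theta> t)\<^sup>2)"
    unfolding expected_total_score_def expected_quad_score acc
    by (simp add: sum_subtractf sum.distrib)
  also have "\<bar>\<dots>\<bar> \<le> (\<Sum>t<m. 2 * \<beta>)"
  proof (rule order.trans[OF sum_abs sum_mono])
    fix t assume "t \<in> {..<m}"
    then show "\<bar>(p t - \<theta> t)\<^sup>2 - (r t - \<theta> t)\<^sup>2\<bar> \<le> 2 * \<beta>"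
      using assms abs_diff_power2_le[of "r t" "p t" "\<theta> t"]
      by (force simp: unit_vec_def abs_minus_commute)
  qed
  finally show ?thesis
    by (simp add: mult_ac)
qed

lemma expected_total_score_gap:
  assumes m: "0 < m" and units: "unit_vec m r" "unit_vec m r'" "unit_vec m p" "unit_vec m p'" "unit_vec m \<theta>"
    and close: "\<And>t. t < m \<Longrightarrow> \<bar>r t - p t\<bar> \<le> \<beta>" "\<And>t. t < m \<Longrightarrow> \<bar>r' t - p' t\<bar> \<le> \<beta>"
    and worse: "accuracy m p' \<theta> < accuracy m p \<theta> - \<epsilon>"
  shows "real m * (\<epsilon> - 4 * \<beta>) < expected_total_score m \<theta> r - expected_total_score m \<theta> r'"
proof -
  have "real m * \<epsilon> < real m * accuracy m p \<theta> - real m * accuracy m p' \<theta>"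
    using worse m by (simp flip: right_diff_distrib)
  then show ?thesis
    using expected_total_score_close_accuracy[OF units(1,3,5) close(1)]
      expected_total_score_close_accuracy[OF units(2,4,5) close(2)]
    by (simp add: abs_le_iff algebra_simps)
qed

lemma total_score_concentration:
  assumes "unit_vec m \<theta>" "unit_vec m r" "0 < m" "0 \<le> x"
  shows "measure_pmf.prob (outcome_pmf m \<theta>) {y. x \<le> \<bar>total_score m r y - expected_total_score m \<theta> r\<bar>}
         \<le> 2 * exp (- 2 * x\<^sup>2 / m)"
proof -
  have "\<bar>quad_score (r t) True - quad_score (r t) False\<bar> \<le> 1" if "t < m" for t
    using assms(2) that by (auto simp: unit_vec_def quad_score_True_minus_False)
  from outcome_pmf_hoeffding[OF assms(1) this assms(3,4)] show ?thesis
    unfolding total_score_def expected_total_score_def .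
qed

lemma prob_total_score_deviates:
  assumes "unit_vec m \<theta>" "report_matrix n m R" "0 < m" "0 \<le> x"
  shows "measure_pmf.prob (outcome_pmf m \<theta>)
           {y. \<exists>k<n. x \<le> \<bar>total_score m (R k) y - expected_total_score m \<theta> (R k)\<bar>}
         \<le> 2 * real n * exp (- 2 * x\<^sup>2 / m)"
proof -
  let ?dev = "\<lambda>k. {y. x \<le> \<bar>total_score m (R k) y - expected_total_score m \<theta> (R k)\<bar>}"
  have "{y. \<exists>k<n. x \<le> \<bar>total_score m (R k) y - expected_total_score m \<theta> (R k)\<bar>} = (\<Union>k<n. ?dev k)"
    by blast
  also have "measure_pmf.prob (outcome_pmf m \<theta>) \<dots> \<le> (\<Sum>k<n. measure_pmf.prob (outcome_pmf m \<theta>) (?dev k))"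
    by (rule measure_pmf.finite_measure_subadditive_finite) auto
  also have "\<dots> \<le> (\<Sum>k<n. 2 * exp (- 2 * x\<^sup>2 / m))"
    using assms by (intro sum_mono total_score_concentration) (auto simp: report_matrix_def)
  finally show ?thesis
    by simp
qed

section \<open>The noise selects a clear leader\<close>

definition noisy_winner :: "nat \<Rightarrow> real \<Rightarrow> (nat \<Rightarrow> real) \<Rightarrow> nat \<Rightarrow> (nat \<Rightarrow> real) set" where
  "noisy_winner n b q i = {w \<in> space (noise_measure n b). \<forall>j<n. j \<noteq> i \<longrightarrow> q j + w j < q i + w i}"

lemma rnm_select_eq_measure_noisy_winner:
  "rnm_select n m b R y i = measure (noise_measure n b) (noisy_winner n b (\<lambda>j. total_score m (R j) y) i)"
  unfolding rnm_select_def noisy_winner_def ..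

lemma ex_max_lessThan:
  fixes f :: "nat \<Rightarrow> 'a :: linorder"
  assumes "0 < n"
  obtains k where "k < n" "\<And>i. i < n \<Longrightarrow> f i \<le> f k"
proof -
  have "Max (f ` {..<n}) \<in> f ` {..<n}"
    using assms by (intro Max_in) auto
  then obtain k where "k < n" "f k = Max (f ` {..<n})"
    by auto
  then show ?thesis
    using that by simp
qed

lemma strict_argmax_or_tie:
  fixes V :: "nat \<Rightarrow> real"
  assumes "0 < n"
  obtains i where "i < n" "\<And>j. j < n \<Longrightarrow> j \<noteq> i \<Longrightarrow> V j < V i"
    | j l where "j < n" "l < n" "j \<noteq> l" "V j = V l"
proof -
  obtain i where i: "i < n" "\<And>j. j < n \<Longrightarrow> V j \<le> V i"
    using ex_max_lessThan[OF assms, of V] by blast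
  show ?thesis
  proof (cases "\<exists>j<n. j \<noteq> i \<and> V j = V i")
    case True
    then show ?thesis
      using that(2) i(1) by blast
  next
    case False
    then have "V j < V i" if "j < n" "j \<noteq> i" for j
      using i(2)[OF that(1)] that by (auto simp: less_le)
    then show ?thesis
      using that(1) i(1) by blast
  qed
qed

definition noise_tie :: "nat \<Rightarrow> real \<Rightarrow> (nat \<Rightarrow> real) \<Rightarrow> (nat \<Rightarrow> real) set" where
  "noise_tie n b q = {w \<in> space (noise_measure n b). \<exists>j<n. \<exists>l<n. j \<noteq> l \<and> q j + w j = q l + w l}"

lemma noise_tie_null:
  assumes b: "0 < b"
  shows "noise_tie n b q \<in> sets (noise_measure n b)" "measure (noise_measure n b) (noise_tie n b q) = 0"
proof -
  let ?N = "noise_measure n b"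
  interpret N: prob_space ?N
    using b by (rule prob_space_noise_measure)
  define P where "P = {(j, l). j < n \<and> l < n \<and> j \<noteq> l}"
  define tie where "tie = (\<lambda>(j, l). {w \<in> space ?N. w j + (q j - q l) = w l})"
  have P: "finite P"
    unfolding P_def by (rule finite_subset[of _ "{..<n} \<times> {..<n}"]) auto
  have tie_sets: "tie jl \<in> N.events" if "jl \<in> P" for jl
    using that unfolding P_def tie_def by (auto intro: sets_noise_tie)
  have eq: "noise_tie n b q = (\<Union>jl\<in>P. tie jl)"
    unfolding noise_tie_def P_def tie_def by (auto simp: algebra_simps)
  then show "noise_tie n b q \<in> N.events"
    using P tie_sets by (auto intro: sets.finite_UN)
  have "measure ?N (noise_tie n b q) \<le> (\<Sum>jl\<in>P. measure ?N (tie jl))"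
    unfolding eq using P tie_sets by (intro N.finite_measure_subadditive_finite) auto
  also have "\<dots> = 0"
    using b by (intro sum.neutral) (auto simp: P_def tie_def measure_noise_tie)
  finally show "measure ?N (noise_tie n b q) = 0"
    by (simp add: antisym)
qed

definition large_noise :: "nat \<Rightarrow> real \<Rightarrow> nat \<Rightarrow> nat set \<Rightarrow> real \<Rightarrow> (nat \<Rightarrow> real) set" where
  "large_noise n b k J D = {w \<in> space (noise_measure n b). w k \<le> - (D / 2)}
                          \<union> (\<Union>j\<in>J. {w \<in> space (noise_measure n b). D / 2 \<le> w j})"

lemma large_noise_bound:
  assumes b: "0 < b" and "k < n" "J \<subseteq> {..<n}" "0 \<le> D"
  shows "large_noise n b k J D \<in> sets (noise_measure n b)"
    and "measure (noise_measure n b) (large_noise n b k J D) \<le> real n * exp (- D / (2 * b))"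
proof -
  let ?N = "noise_measure n b" and ?e = "exp (- D / (2 * b)) / 2"
  interpret N: prob_space ?N
    using b by (rule prob_space_noise_measure)
  have J: "finite J"
    using assms(3) by (rule finite_subset) simp
  show "large_noise n b k J D \<in> N.events"
    unfolding large_noise_def using assms(2,3) J
    by (intro sets.Un sets_noise_le sets.finite_UN sets_noise_ge) auto
  have "measure ?N (large_noise n b k J D) \<le> measure ?N {w \<in> space ?N. w k \<le> - (D / 2)}
                             + measure ?N (\<Union>j\<in>J. {w \<in> space ?N. D / 2 \<le> w j})"
    unfolding large_noise_def using assms(2,3) J
    by (intro measure_Un_le sets_noise_le sets.finite_UN sets_noise_ge) auto
  also have "\<dots> \<le> ?e + (\<Sum>j\<in>J. measure ?N {w \<in> space ?N. D / 2 \<le> w j})"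
    using J assms sets_noise_ge[of _ n b "D / 2"]
    by (intro add_mono N.finite_measure_subadditive_finite) (auto simp: measure_noise_le)
  also have "\<dots> = ?e + (\<Sum>j\<in>J. exp (- (D / 2) / b) / 2)"
    using assms by (intro arg_cong2[where f="(+)"] refl sum.cong measure_noise_ge) auto
  also have "\<dots> = (1 + real (card J)) * ?e"
    by (simp add: algebra_simps)
  also have "\<dots> \<le> real n * exp (- D / (2 * b))"
  proof -
    have "card J \<le> card {..<n}"
      using assms(3) by (rule card_mono[rotated]) simp
    then have "1 + real (card J) \<le> 2 * real n"
      using assms(2) by simp
    then show ?thesis
      by (simp add: mult_right_mono[of _ _ "exp (- D / (2 * b)) / 2", simplified])
  qed
  finally show "measure ?N (large_noise n b k J D) \<le> real n * exp (- D / (2 * b))" .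
qed

text \<open>If \<open>k \<in> S\<close> leads every index outside \<open>S\<close> by \<open>D\<close>, a strict winner outside \<open>S\<close> needs a
  noise of at least \<open>D / 2\<close> on itself or of at most \<open>- D / 2\<close> on \<open>k\<close>.\<close>

lemma noise_space_cover:
  assumes "S \<subseteq> {..<n}" "k \<in> S" "\<And>j. j < n \<Longrightarrow> j \<notin> S \<Longrightarrow> D \<le> q k - q j"
  shows "space (noise_measure n b)
           \<subseteq> (\<Union>i\<in>S. noisy_winner n b q i) \<union> large_noise n b k ({..<n} - S) D \<union> noise_tie n b q"
proof
  fix w
  assume w: "w \<in> space (noise_measure n b)"
  have k: "k < n"
    using assms(1,2) by auto
  consider (win) i where "i < n" "\<And>j. j < n \<Longrightarrow> j \<noteq> i \<Longrightarrow> q j + w j < q i + w i"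
    | (tie) j l where "j < n" "l < n" "j \<noteq> l" "q j + w j = q l + w l"
    using strict_argmax_or_tie[of n "\<lambda>j. q j + w j"] k by auto
  then show "w \<in> (\<Union>i\<in>S. noisy_winner n b q i) \<union> large_noise n b k ({..<n} - S) D \<union> noise_tie n b q"
  proof cases
    case (win i)
    then have i_wins: "w \<in> noisy_winner n b q i"
      using w unfolding noisy_winner_def by auto
    show ?thesis
    proof (cases "i \<in> S")
      case False
      then have "D \<le> q k - q i" "q k + w k < q i + w i"
        using assms(2,3) win k by auto
      then have "D / 2 \<le> w i \<or> w k \<le> - (D / 2)"
        by linarith
      then have "w \<in> large_noise n b k ({..<n} - S) D"
        using w win False unfolding large_noise_def by auto
      then show ?thesis
        by blast
    qed (use i_wins in blast)
  next
    case tie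
    then show ?thesis
      using w unfolding noise_tie_def by blast
  qed
qed

lemma sum_measure_noisy_winner_ge:
  fixes q :: "nat \<Rightarrow> real" and S :: "nat set"
  assumes b: "0 < b" and S: "S \<subseteq> {..<n}" "k \<in> S" and D: "0 \<le> D"
    and lead: "\<And>j. j < n \<Longrightarrow> j \<notin> S \<Longrightarrow> D \<le> q k - q j"
  shows "1 - real n * exp (- D / (2 * b)) \<le> (\<Sum>i\<in>S. measure (noise_measure n b) (noisy_winner n b q i))"
proof -
  let ?N = "noise_measure n b" and ?W = "\<Union>i\<in>S. noisy_winner n b q i"
  let ?B = "large_noise n b k ({..<n} - S) D" and ?T = "noise_tie n b q"
  interpret N: prob_space ?N
    using b by (rule prob_space_noise_measure)
  have fin: "finite S"
    using S(1) by (rule finite_subset) simp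
  have win_sets: "noisy_winner n b q i \<in> N.events" if "i \<in> S" for i
    unfolding noisy_winner_def using that S by (intro sets_noise_wins) auto
  then have W: "?W \<in> N.events"
    using fin by (intro sets.finite_UN) auto
  have B: "?B \<in> N.events" "measure ?N ?B \<le> real n * exp (- D / (2 * b))"
    using large_noise_bound[OF b _ _ D, of k n "{..<n} - S"] S by auto
  note T = noise_tie_null[OF b, of n q]
  have "disjoint_family_on (noisy_winner n b q) S"
    unfolding disjoint_family_on_def
  proof (intro ballI impI equals0I)
    fix i j w
    assume "i \<in> S" "j \<in> S" "i \<noteq> j" and "w \<in> noisy_winner n b q i \<inter> noisy_winner n b q j"
    then have "q j + w j < q i + w i" "q i + w i < q j + w j"
      using S(1) unfolding noisy_winner_def by auto
    then show False
      by simp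
  qed
  then have sum_win: "(\<Sum>i\<in>S. measure ?N (noisy_winner n b q i)) = measure ?N ?W"
    using fin win_sets by (intro N.finite_measure_finite_Union[symmetric]) auto
  have "1 \<le> measure ?N (?W \<union> ?B \<union> ?T)"
    using N.finite_measure_mono[OF noise_space_cover[where b = b and q = q, OF S lead]] W B T
    by (simp add: N.prob_space)
  also have "\<dots> \<le> measure ?N (?W \<union> ?B) + measure ?N ?T"
    using W B T S by (intro measure_Un_le sets.Un) auto
  also have "\<dots> \<le> measure ?N ?W + measure ?N ?B + measure ?N ?T"
    using measure_Un_le[OF W] B S by simp
  finally show ?thesis
    using sum_win B T S by fastforce
qed

lemma sum_rnm_select_ge:
  assumes "0 < b" "S \<subseteq> {..<n}" "k \<in> S" "0 \<le> D"
    and "\<And>j. j < n \<Longrightarrow> j \<notin> S \<Longrightarrow> D \<le> total_score m (R k) y - total_score m (R j) y"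
  shows "1 - real n * exp (- D / (2 * b)) \<le> (\<Sum>i\<in>S. rnm_select n m b R y i)"
  unfolding rnm_select_eq_measure_noisy_winner using assms by (rule sum_measure_noisy_winner_ge)

lemma sample_size_bounds:
  fixes \<epsilon> \<delta> \<gamma> :: real
  assumes \<epsilon>: "0 < \<epsilon>" and \<delta>: "0 < \<delta>" "\<delta> < 1" and \<gamma>: "0 < \<gamma>" "\<gamma> \<le> \<epsilon> / 14" and n: "1 \<le> n"
    and m: "28 * ln (2 * real n / \<delta>) / (\<epsilon> * \<gamma>) \<le> real m"
  shows "0 < m"
    and "real n * exp (- (2 * \<epsilon> * real m / 7) / (2 * (4 / \<gamma>))) \<le> \<delta> / 2"
    and "2 * real n * exp (- 2 * (\<epsilon> * real m / 7)\<^sup>2 / real m) \<le> \<delta> / 2"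
proof -
  define L where "L = ln (2 * real n / \<delta>)"
  have L: "0 < L"
    unfolding L_def using \<delta> n by (intro ln_gt_zero) (auto simp: field_simps)
  have exp_L: "exp (- L) = \<delta> / (2 * real n)"
    unfolding L_def using \<delta> n by (simp add: exp_minus exp_ln)
  have L_le: "L \<le> \<epsilon> * \<gamma> * real m / 28"
    using m \<epsilon> \<gamma> unfolding L_def by (simp add: field_simps)
  then have "0 < \<epsilon> * \<gamma> * real m"
    using L by linarith
  then show m_pos: "0 < m"
    using \<epsilon> \<gamma> by (simp add: zero_less_mult_iff)
  have "L \<le> (2 * \<epsilon> * real m / 7) / (2 * (4 / \<gamma>))"
    using L_le \<gamma> by (simp add: field_simps)
  then have "real n * exp (- (2 * \<epsilon> * real m / 7) / (2 * (4 / \<gamma>))) \<le> real n * exp (- L)"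
    by (intro mult_left_mono) auto
  then show "real n * exp (- (2 * \<epsilon> * real m / 7) / (2 * (4 / \<gamma>))) \<le> \<delta> / 2"
    using n by (simp add: exp_L)
  have "\<epsilon> * \<gamma> * real m \<le> \<epsilon> * (\<epsilon> / 14) * real m"
    using \<epsilon> \<gamma> by (intro mult_right_mono mult_left_mono) auto
  then have "2 * L \<le> 2 * (\<epsilon> * real m / 7)\<^sup>2 / real m"
    using L_le L m_pos by (simp add: power2_eq_square field_simps)
  then have "2 * real n * exp (- 2 * (\<epsilon> * real m / 7)\<^sup>2 / real m) \<le> 2 * real n * exp (- L - L)"
    by (intro mult_left_mono) auto
  also have "\<dots> = 2 * real n * (exp (- L) * exp (- L))"
    by (simp add: exp_add[symmetric])
  also have "\<dots> = \<delta> * (\<delta> / (2 * real n))"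
    using n by (simp add: exp_L field_simps)
  also have "\<dots> \<le> \<delta> * (1 / 2)"
    using \<delta> n by (intro mult_left_mono) (auto simp: field_simps)
  finally show "2 * real n * exp (- 2 * (\<epsilon> * real m / 7)\<^sup>2 / real m) \<le> \<delta> / 2"
    by simp
qed

lemma non_optimal_expected_score_gap:
  assumes b: "b = 4 / \<gamma>" "0 < \<gamma>" "\<gamma> \<le> \<epsilon> / 14" and m: "0 < m"
    and P: "\<forall>i<n. unit_vec m (P i)" and \<theta>: "unit_vec m \<theta>" and R: "report_matrix n m R"
    and und: "\<forall>i<n. undominated n m b i (P i) (R i)"
    and best: "k < n" "\<And>i. i < n \<Longrightarrow> accuracy m (P i) \<theta> \<le> accuracy m (P k) \<theta>"
    and j: "j < n" "\<not> eps_optimal n m \<epsilon> P \<theta> j"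
  shows "4 * \<epsilon> * real m / 7 \<le> expected_total_score m \<theta> (R k) - expected_total_score m \<theta> (R j)"
proof -
  obtain i where "i < n" "accuracy m (P j) \<theta> < accuracy m (P i) \<theta> - \<epsilon>"
    using j(2) unfolding eps_optimal_def by auto
  with best have worse: "accuracy m (P j) \<theta> < accuracy m (P k) \<theta> - \<epsilon>"
    by force
  moreover have "0 < \<epsilon>"
    using b(2,3) by simp
  ultimately have "j \<noteq> k"
    by auto
  then have n: "2 \<le> n"
    using best(1) j(1) by linarith
  have close: "\<bar>R l t - P l t\<bar> \<le> 6 / b" if "l < n" "t < m" for l t
    using undominated_report_close[of b n l t m "P l" "R l"] b that n und P R
    by (auto simp: report_matrix_def)
  have "real m * (\<epsilon> - 4 * (6 / b)) < expected_total_score m \<theta> (R k) - expected_total_score m \<theta> (R j)"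
    using R P \<theta> best(1) j(1) close worse
    by (intro expected_total_score_gap[OF m]) (auto simp: report_matrix_def)
  moreover have "6 / b = 3 * \<gamma> / 2"
    using b(1) by simp
  then have "4 * \<epsilon> / 7 \<le> \<epsilon> - 4 * (6 / b)"
    using b(3) by simp
  then have "real m * (4 * \<epsilon> / 7) \<le> real m * (\<epsilon> - 4 * (6 / b))"
    by (rule mult_left_mono) simp
  moreover have "real m * (4 * \<epsilon> / 7) = 4 * \<epsilon> * real m / 7"
    by simp
  ultimately show ?thesis
    by linarith
qed

lemma sum_rnm_select_eps_optimal_ge:
  assumes b: "b = 4 / \<gamma>" "0 < \<gamma>" "\<gamma> \<le> \<epsilon> / 14" and m: "0 < m"
    and P: "\<forall>i<n. unit_vec m (P i)" and \<theta>: "unit_vec m \<theta>" and R: "report_matrix n m R"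
    and und: "\<forall>i<n. undominated n m b i (P i) (R i)"
    and best: "k < n" "\<And>i. i < n \<Longrightarrow> accuracy m (P i) \<theta> \<le> accuracy m (P k) \<theta>"
    and conc: "\<forall>i<n. \<bar>total_score m (R i) y - expected_total_score m \<theta> (R i)\<bar> < \<epsilon> * real m / 7"
  shows "1 - real n * exp (- (2 * \<epsilon> * real m / 7) / (2 * b))
           \<le> (\<Sum>i\<in>{i. i < n \<and> eps_optimal n m \<epsilon> P \<theta> i}. rnm_select n m b R y i)"
proof (rule sum_rnm_select_ge)
  show "0 < b" "0 \<le> 2 * \<epsilon> * real m / 7"
    using b by simp_all
  show "k \<in> {i. i < n \<and> eps_optimal n m \<epsilon> P \<theta> i}"
    using best b by (force simp: eps_optimal_def)
  fix j
  assume "j < n" "j \<notin> {i. i < n \<and> eps_optimal n m \<epsilon> P \<theta> i}"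
  then have "4 * \<epsilon> * real m / 7 \<le> expected_total_score m \<theta> (R k) - expected_total_score m \<theta> (R j)"
    by (intro non_optimal_expected_score_gap[OF b m P \<theta> R und best]) auto
  then show "2 * \<epsilon> * real m / 7 \<le> total_score m (R k) y - total_score m (R j) y"
    using conc[rule_format, OF best(1)] conc[rule_format, OF \<open>j < n\<close>] unfolding abs_less_iff by linarith
qed auto

lemma (in prob_space) prob_compl_mult_le_expectation:
  assumes "integrable M f" "\<And>x. x \<in> space M \<Longrightarrow> 0 \<le> f x" "B \<in> events"
    and "\<And>x. x \<in> space M - B \<Longrightarrow> c \<le> f x" "0 \<le> c"
  shows "c * (1 - prob B) \<le> expectation f"
proof -
  have "c * (1 - prob B) = expectation (\<lambda>x. c * indicator (space M - B) x)"
    using assms(3) by (simp add: prob_compl)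
  also have "\<dots> \<le> expectation f"
    using assms by (intro integral_mono integrable_mult_right integrable_real_indicator)
      (auto simp: emeasure_eq_measure split: split_indicator)
  finally show ?thesis .
qed

lemma success_prob_ge:
  assumes "unit_vec m \<theta>" "0 \<le> c" "measure_pmf.prob (outcome_pmf m \<theta>) B \<le> \<beta>"
    and "\<And>y. y \<notin> B \<Longrightarrow> c \<le> (\<Sum>i\<in>{i. i < n \<and> eps_optimal n m \<epsilon> P \<theta> i}. rnm_select n m b R y i)"
  shows "c * (1 - \<beta>) \<le> success_prob n m b \<epsilon> P R \<theta>"
proof -
  have "c * (1 - \<beta>) \<le> c * (1 - measure_pmf.prob (outcome_pmf m \<theta>) B)"
    using assms(2,3) by (intro mult_left_mono) auto
  also have "\<dots> \<le> success_prob n m b \<epsilon> P R \<theta>"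
    unfolding success_prob_def expectation_outcome_pmf[OF assms(1), symmetric]
    using assms(2,4) finite_subset[OF set_pmf_outcome_pmf finite_outcomes]
    by (intro measure_pmf.prob_compl_mult_le_expectation integrable_measure_pmf_finite sum_nonneg)
      (auto simp: rnm_select_def)
  finally show ?thesis .
qed

theorem mainTheorem17:
  fixes n m :: nat and \<epsilon> \<delta> \<gamma> b :: real
    and P R :: "nat \<Rightarrow> nat \<Rightarrow> real" and \<theta> :: "nat \<Rightarrow> real"
  assumes "0 < \<epsilon>" "\<epsilon> \<le> 1" "0 < \<delta>" "\<delta> < 1"
    and "0 < \<gamma>" "\<gamma> \<le> \<epsilon> / 14" "b = 4 / \<gamma>"
    and "n \<ge> 1"
    and "\<forall>i<n. unit_vec m (P i)" "unit_vec m \<theta>"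
    and "real m \<ge> 28 * ln (2 * real n / \<delta>) / (\<epsilon> * \<gamma>)"
    and "report_matrix n m R"
    and "\<forall>i<n. undominated n m b i (P i) (R i)"
  shows "success_prob n m b \<epsilon> P R \<theta> \<ge> 1 - \<delta>"
proof -
  note m = sample_size_bounds[OF assms(1,3,4,5,6,8,11)]
  obtain k where k: "k < n" "\<And>i. i < n \<Longrightarrow> accuracy m (P i) \<theta> \<le> accuracy m (P k) \<theta>"
    using ex_max_lessThan[of n "\<lambda>i. accuracy m (P i) \<theta>"] assms(8) by auto
  define \<mu> where "\<mu> i = expected_total_score m \<theta> (R i)" for i
  have good: "1 - \<delta> / 2 \<le> (\<Sum>i\<in>{i. i < n \<and> eps_optimal n m \<epsilon> P \<theta> i}. rnm_select n m b R y i)"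
    if "\<forall>i<n. \<bar>total_score m (R i) y - \<mu> i\<bar> < \<epsilon> * real m / 7" for y
  proof -
    have "1 - real n * exp (- (2 * \<epsilon> * real m / 7) / (2 * b))
            \<le> (\<Sum>i\<in>{i. i < n \<and> eps_optimal n m \<epsilon> P \<theta> i}. rnm_select n m b R y i)"
      using sum_rnm_select_eps_optimal_ge[OF assms(7,5,6) m(1) assms(9,10,12,13) k(1) k(2)] that
      unfolding \<mu>_def by blast
    then show ?thesis
      using m(2) assms(7) by simp
  qed
  have bad: "measure_pmf.prob (outcome_pmf m \<theta>)
          {y. \<exists>i<n. \<epsilon> * real m / 7 \<le> \<bar>total_score m (R i) y - \<mu> i\<bar>} \<le> \<delta> / 2"
    using prob_total_score_deviates[OF assms(10,12) m(1), of "\<epsilon> * real m / 7"] m(3) assms(1)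
    unfolding \<mu>_def by simp
  have "(1 - \<delta> / 2) * (1 - \<delta> / 2) \<le> success_prob n m b \<epsilon> P R \<theta>"
    using good assms(4) by (intro success_prob_ge[OF assms(10) _ bad]) (auto simp: not_le)
  moreover have "(1 - \<delta> / 2) * (1 - \<delta> / 2) = 1 - \<delta> + (\<delta> / 2)\<^sup>2"
    by (simp add: power2_eq_square algebra_simps)
  ultimately show ?thesis
    using zero_le_power2[of "\<delta> / 2"] by linarith
qed

end
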